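(* Let $M\in\mathfrak{R}H^\infty_{m\times k}$ and $N\in\mathfrak{R}H^\infty_{m\times\ell}$ be given by stable realizations \[ M(z)=D_M+zC(I_n-zA)^{-1}B_M,\qquad N(z)=D_N+zC(I_n-zA)^{-1}B_N, \] with $A$ a stable $n\times n$ matrix, let $W_{obs}$ be the observability operator of $\{C,A\}$, and put $Y=W_{obs}^*W_{obs}$. If $M(\lambda)M(z)^*=N(\lambda)N(z)^*$ for all $z,\lambda\in\mathbb{D}$, then the $k\times\ell$ matrix \[ U=(D_M^*D_M+B_M^*YB_M)^+(D_M^*D_N+B_M^*YB_N) \] is a partial isometry and $M(z)U=N(z)$ for all $z\in\mathbb{D}$.
   Context: $\mathbb{D}$ is the open unit disc; a stable matrix has all eigenvalues in $\mathbb{D}$. $\mathfrak{R}H^\infty_{k\times l}$: $k\times l$ rational matrix functions without poles in the closed unit disc. $W_{obs}=\operatorname{col}(CA^j)_{j\ge0}:\mathbb{C}^n\to\ell^2_+(\mathbb{C}^m)$, so $Y=\sum_{\nu\ge0}(A^* )^\nu C^*CA^\nu$. ${}^+$ denotes the Moore--Penrose generalized inverse. *)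

theory Defs
  imports "HOL-Analysis.Analysis"
begin

definition cadj :: "complex^'n^'m \<Rightarrow> complex^'m^'n" where
  "cadj A = (\<chi> i j. cnj (A $ j $ i))"

fun mpow :: "complex^'n^'n \<Rightarrow> nat \<Rightarrow> complex^'n^'n" where
  "mpow A 0 = mat 1"
| "mpow A (Suc k) = A ** mpow A k"

definition stable :: "complex^'n^'n \<Rightarrow> bool" where
  "stable A \<longleftrightarrow> (\<forall>c v. v \<noteq> 0 \<and> A *v v = c *s v \<longrightarrow> cmod c < 1)"

text \<open>Observability Gramian Y = W_obs^* W_obs = sum_nu (A^*)^nu C^* C A^nu.\<close>
definition obs_gramian :: "complex^'n^'m \<Rightarrow> complex^'n^'n \<Rightarrow> complex^'n^'n" where
  "obs_gramian C A = (\<Sum>\<nu>. mpow (cadj A) \<nu> ** cadj C ** C ** mpow A \<nu>)"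

definition transfer :: "complex^'k^'m \<Rightarrow> complex^'n^'m \<Rightarrow> complex^'n^'n \<Rightarrow> complex^'k^'n
    \<Rightarrow> complex \<Rightarrow> complex^'k^'m" where
  "transfer D C A B z = D + mat z ** C ** matrix_inv (mat 1 - mat z ** A) ** B"

definition mp_inverse :: "complex^'n^'m \<Rightarrow> complex^'m^'n" where
  "mp_inverse A = (THE X. A ** X ** A = A \<and> X ** A ** X = X \<and>
       cadj (A ** X) = A ** X \<and> cadj (X ** A) = X ** A)"

definition cinner :: "complex^'n \<Rightarrow> complex^'n \<Rightarrow> complex" where
  "cinner x y = (\<Sum>i\<in>UNIV. x $ i * cnj (y $ i))"

definition partial_isometry :: "complex^'k^'m \<Rightarrow> bool" where
  "partial_isometry U \<longleftrightarrow>
     (\<forall>x. (\<forall>y. U *v y = 0 \<longrightarrow> cinner x y = 0) \<longrightarrow> norm (U *v x) = norm x)"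

end

theory Submission
  imports Defs "Jordan_Normal_Form.Jordan_Normal_Form_Existence" "Jordan_Normal_Form.Spectral_Radius"
    "HOL-Complex_Analysis.Cauchy_Integral_Formula"
begin

text \<open>
  Write \<open>M(z) = \<Sum> z\<^sup>j M\<^sub>j\<close> with the Markov parameters \<open>M\<^sub>0 = D\<^sub>M\<close>, \<open>M\<^sub>j\<^sub>+\<^sub>1 = C A\<^sup>j B\<^sub>M\<close>,
  and likewise for \<open>N\<close>. Comparing Taylor coefficients in \<open>z\<close> and \<open>\<lambda>\<close>, the hypothesis says
  \<open>M\<^sub>i M\<^sub>j\<^sup>* = N\<^sub>i N\<^sub>j\<^sup>*\<close> for all \<open>i, j\<close>, while the two factors of \<open>U\<close> are the convergent sums
  \<open>G = \<Sum> M\<^sub>j\<^sup>* M\<^sub>j\<close> and \<open>H = \<Sum> M\<^sub>j\<^sup>* N\<^sub>j\<close>. These identities give \<open>G\<^sup>2 = H H\<^sup>*\<close> and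
  \<open>H N\<^sub>j\<^sup>* = G M\<^sub>j\<^sup>*\<close>, and \<open>M\<^sub>j G\<^sup>+ G = M\<^sub>j\<close> because \<open>\<Sum> (M\<^sub>j (I - G\<^sup>+G))\<^sup>* M\<^sub>j (I - G\<^sup>+G) = 0\<close>.
  Hence \<open>U U\<^sup>* = G\<^sup>+ G\<close> is a projection fixing \<open>U\<close>, so \<open>U\<close> is a partial isometry, and
  expanding \<open>(N\<^sub>i - M\<^sub>i U)(N\<^sub>i - M\<^sub>i U)\<^sup>*\<close> gives \<open>0\<close>, i.e. \<open>M\<^sub>i U = N\<^sub>i\<close>.
\<close>

no_notation Matrix.vec_index (infixl "$" 100)
no_notation Matrix.scalar_prod (infix "\<bullet>" 70)
hide_const (open) Matrix.mat Matrix.vec Matrix.row Matrix.col Matrix.orthogonal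
hide_fact (open) Matrix.vec_eq_iff Matrix.mat_def

section \<open>Matrix algebra\<close>

definition mscale :: "complex \<Rightarrow> complex^'b^'a \<Rightarrow> complex^'b^'a" where
  "mscale c X = (\<chi> i j. c * X $ i $ j)"

lemma mscale_nth[simp]: "mscale c X $ i $ j = c * X $ i $ j"
  by (simp add: mscale_def)

lemma cadj_nth[simp]: "cadj X $ i $ j = cnj (X $ j $ i)"
  by (simp add: cadj_def)

lemma mat_nth: "mat a $ i $ j = (if i = j then a else 0)"
  by (simp add: Finite_Cartesian_Product.mat_def)

lemma matrix_matrix_mult_nth: "(X ** Y) $ i $ j = (\<Sum>k\<in>UNIV. X $ i $ k * Y $ k $ j)"
  by (simp add: matrix_matrix_mult_def)

lemma mat_mult_eq_mscale: "mat c ** (X::complex^'b^'a) = mscale c X"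
  by (simp add: vec_eq_iff matrix_matrix_mult_nth mat_nth
      if_distrib [of "\<lambda>x. x * y" for y] sum.delta cong: if_cong)

lemma mscale_mult_left: "mscale c X ** Y = mscale c (X ** Y)"
  by (simp add: vec_eq_iff matrix_matrix_mult_nth sum_distrib_left ac_simps)

lemma mscale_mult_right: "X ** mscale c Y = mscale c (X ** Y)"
  by (simp add: vec_eq_iff matrix_matrix_mult_nth sum_distrib_left ac_simps)

lemma mscale_mscale: "mscale a (mscale b X) = mscale (a * b) X"
  by (simp add: vec_eq_iff)

lemma mscale_one[simp]: "mscale 1 X = X"
  by (simp add: vec_eq_iff)

lemma mscale_add: "mscale c (X + Y) = mscale c X + mscale c Y"
  by (simp add: vec_eq_iff algebra_simps)

lemma mscale_diff: "mscale c (X - Y) = mscale c X - mscale c Y"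
  by (simp add: vec_eq_iff algebra_simps)

lemma mscale_scaleR: "mscale c (r *\<^sub>R X) = r *\<^sub>R mscale c X"
  by (simp add: vec_eq_iff scaleR_conv_of_real)

lemma cadj_cadj[simp]: "cadj (cadj X) = X"
  by (simp add: vec_eq_iff)

lemma cadj_add: "cadj (X + Y) = cadj X + cadj Y"
  by (simp add: vec_eq_iff)

lemma cadj_diff: "cadj (X - Y) = cadj X - cadj Y"
  by (simp add: vec_eq_iff)

lemma cadj_zero[simp]: "cadj 0 = 0"
  by (simp add: vec_eq_iff)

lemma cadj_mult: "cadj (X ** Y) = cadj Y ** cadj X"
  by (simp add: vec_eq_iff matrix_matrix_mult_nth ac_simps)

lemma cadj_mscale: "cadj (mscale c X) = mscale (cnj c) (cadj X)"
  by (simp add: vec_eq_iff)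

lemma cadj_mat_1[simp]: "cadj (mat 1) = mat 1"
  by (simp add: vec_eq_iff mat_nth)

lemma cadj_scaleR: "cadj (r *\<^sub>R X) = r *\<^sub>R cadj X"
  by (simp add: vec_eq_iff)

lemma matrix_mult_add_right: "(X + Y) ** (Z::complex^'c^'b) = X ** Z + Y ** Z"
  by (simp add: vec_eq_iff matrix_matrix_mult_nth distrib_right sum.distrib)

lemma matrix_mult_diff_right: "(X - Y) ** (Z::complex^'c^'b) = X ** Z - Y ** Z"
  by (simp add: vec_eq_iff matrix_matrix_mult_nth left_diff_distrib sum_subtractf)

lemma matrix_mult_diff_left: "(Z::complex^'b^'a) ** (X - Y) = Z ** X - Z ** Y"
  by (simp add: vec_eq_iff matrix_matrix_mult_nth right_diff_distrib sum_subtractf)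

lemma matrix_mult_scaleR_left: "(r *\<^sub>R (X::complex^'b^'a)) ** (Y::complex^'c^'b) = r *\<^sub>R (X ** Y)"
  by (simp add: vec_eq_iff matrix_matrix_mult_def scaleR_sum_right)

lemma matrix_mult_scaleR_right: "(X::complex^'b^'a) ** (r *\<^sub>R (Y::complex^'c^'b)) = r *\<^sub>R (X ** Y)"
  by (simp add: vec_eq_iff matrix_matrix_mult_def scaleR_sum_right)

lemma mpow_Suc_right: "mpow A (Suc k) = mpow A k ** A"
  by (induct k) (simp_all add: matrix_mul_assoc)

lemma mpow_commute: "mpow A k ** A = A ** mpow A k"
  using mpow_Suc_right[of A k] by simp

lemma cadj_mpow: "cadj (mpow A k) = mpow (cadj A) k"
  by (induct k) (simp_all add: cadj_mult mpow_Suc_right mpow_commute)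

lemma matrix_inv_eqI:
  assumes "X ** S = mat 1" "S ** X = mat 1"
  shows "matrix_inv (X::complex^'n^'n) = S"
proof -
  have inv: "X ** matrix_inv X = mat 1 \<and> matrix_inv X ** X = mat 1"
    unfolding matrix_inv_def by (rule someI[of _ S]) (use assms in simp)
  have "matrix_inv X = matrix_inv X ** (X ** S)" using assms by simp
  also have "\<dots> = S" using inv by (simp add: matrix_mul_assoc)
  finally show ?thesis .
qed

section \<open>Norm estimates and bounded linear maps\<close>

lemma norm_entry_le: "cmod (X $ i $ j) \<le> norm (X::complex^'b^'a)"
proof -
  have "norm (X $ i $ j) \<le> norm (X $ i)" by (rule Finite_Cartesian_Product.norm_nth_le)
  also have "\<dots> \<le> norm X" by (rule Finite_Cartesian_Product.norm_nth_le)
  finally show ?thesis by simp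
qed

lemma norm_le_sum_entries: "norm (X::complex^'b^'a) \<le> (\<Sum>i\<in>UNIV. \<Sum>j\<in>UNIV. cmod (X $ i $ j))"
proof -
  have l1: "norm (x::'c::real_normed_vector^'d) \<le> (\<Sum>i\<in>UNIV. norm (x $ i))" for x
    unfolding norm_vec_def by (rule L2_set_le_sum) simp
  have "norm X \<le> (\<Sum>i\<in>UNIV. norm (X $ i))" by (rule l1)
  also have "\<dots> \<le> (\<Sum>i\<in>UNIV. \<Sum>j\<in>UNIV. cmod (X $ i $ j))" by (intro sum_mono l1)
  finally show ?thesis .
qed

lemma norm_le_entry_bound:
  assumes "\<And>i j. cmod (X $ i $ j) \<le> b"
  shows "norm (X::complex^'b^'a) \<le> of_nat (CARD('a) * CARD('b)) * b"
proof -
  have "norm X \<le> (\<Sum>i\<in>UNIV. \<Sum>j\<in>UNIV. cmod (X $ i $ j))" by (rule norm_le_sum_entries)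
  also have "\<dots> \<le> (\<Sum>i\<in>(UNIV::'a set). \<Sum>j\<in>(UNIV::'b set). b)" by (intro sum_mono assms)
  finally show ?thesis by simp
qed

lemma norm_matrix_mult_le:
  "norm ((X::complex^'b^'a) ** (Y::complex^'c^'b))
     \<le> of_nat (CARD('a) * CARD('c) * CARD('b)) * (norm X * norm Y)"
proof -
  have "cmod ((X ** Y) $ i $ j) \<le> of_nat CARD('b) * (norm X * norm Y)" for i j
  proof -
    have "cmod ((X ** Y) $ i $ j) \<le> (\<Sum>k\<in>UNIV. cmod (X $ i $ k) * cmod (Y $ k $ j))"
      unfolding matrix_matrix_mult_nth by (rule order_trans[OF norm_sum]) (simp add: norm_mult)
    also have "\<dots> \<le> (\<Sum>k\<in>(UNIV::'b set). norm X * norm Y)"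
      by (intro sum_mono mult_mono norm_entry_le) auto
    finally show ?thesis by simp
  qed
  then have "norm (X ** Y) \<le> of_nat (CARD('a) * CARD('c)) * (of_nat CARD('b) * (norm X * norm Y))"
    by (rule norm_le_entry_bound)
  then show ?thesis by (simp add: ac_simps)
qed

lemma norm_matrix_mult_le_bound:
  assumes "norm (X::complex^'b^'a) \<le> a" "norm (Y::complex^'c^'b) \<le> b"
  shows "norm (X ** Y) \<le> of_nat (CARD('a) * CARD('c) * CARD('b)) * (a * b)"
proof -
  have "0 \<le> a" using assms(1) norm_ge_zero order_trans by blast
  then have "norm X * norm Y \<le> a * b" using assms by (intro mult_mono) auto
  then have "of_nat (CARD('a) * CARD('c) * CARD('b)) * (norm X * norm Y)
        \<le> of_nat (CARD('a) * CARD('c) * CARD('b)) * (a * b)"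
    by (intro mult_left_mono) auto
  then show ?thesis using norm_matrix_mult_le[of X Y] by linarith
qed

lemma norm_cadj_le: "norm (cadj (X::complex^'b^'a)) \<le> of_nat (CARD('b) * CARD('a)) * norm X"
  by (rule norm_le_entry_bound) (simp add: norm_entry_le)

lemma norm_mscale_le: "norm (mscale c (X::complex^'b^'a)) \<le> of_nat (CARD('a) * CARD('b)) * (cmod c * norm X)"
  by (rule norm_le_entry_bound) (simp add: norm_mult norm_entry_le mult_left_mono)

lemma bounded_linear_cadj: "bounded_linear (cadj :: complex^'b^'a \<Rightarrow> _)"
proof (rule bounded_linear_intro[where K="of_nat (CARD('b) * CARD('a))"])
  show "norm (cadj x) \<le> norm x * of_nat (CARD('b) * CARD('a))" for x :: "complex^'b^'a"
    using norm_cadj_le[of x] by (simp only: mult.commute)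
qed (simp_all add: cadj_add cadj_scaleR)

lemma bounded_linear_matrix_mult_left: "bounded_linear (\<lambda>X::complex^'b^'a. X ** (Y::complex^'c^'b))"
  by (rule bounded_linear_intro[where K="of_nat (CARD('a) * CARD('c) * CARD('b)) * norm Y"])
     (insert norm_matrix_mult_le, simp_all add: matrix_mult_add_right matrix_mult_scaleR_left ac_simps)

lemma bounded_linear_matrix_mult_right: "bounded_linear (\<lambda>Y::complex^'c^'b. (X::complex^'b^'a) ** Y)"
  by (rule bounded_linear_intro[where K="of_nat (CARD('a) * CARD('c) * CARD('b)) * norm X"])
     (insert norm_matrix_mult_le, simp_all add: matrix_add_ldistrib matrix_mult_scaleR_right ac_simps)

lemma bounded_linear_mscale: "bounded_linear (mscale c :: complex^'b^'a \<Rightarrow> _)"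
proof (rule bounded_linear_intro[where K="of_nat (CARD('a) * CARD('b)) * cmod c"])
  show "norm (mscale c x) \<le> norm x * (of_nat (CARD('a) * CARD('b)) * cmod c)" for x :: "complex^'b^'a"
    using norm_mscale_le[of c x] by (simp only: ac_simps)
qed (simp_all add: mscale_add mscale_scaleR)

lemma bounded_linear_entry: "bounded_linear (\<lambda>X::complex^'b^'a. X $ i $ j)"
  by (rule bounded_linear_intro[where K=1]) (simp_all add: norm_entry_le)

section \<open>Geometric decay of the powers of a stable matrix\<close>

lemma jnf_mat_pow_entry_decay:
  fixes B :: "complex Matrix.mat"
  assumes B: "B \<in> carrier_mat n n"
    and ev: "\<And>c. eigenvalue B c \<Longrightarrow> cmod c < 1"
  shows "\<exists>K r. 0 < r \<and> r < 1 \<and>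
           (\<forall>k i j. i < n \<longrightarrow> j < n \<longrightarrow> cmod ((B ^\<^sub>m k) $$ (i,j)) \<le> K * r^k)"
proof -
  define \<rho> where "\<rho> = Max (insert 0 (cmod ` spectrum B))"
  have fin: "finite (insert 0 (cmod ` spectrum B))" using card_finite_spectrum[OF B] by auto
  have rho_ge: "cmod c \<le> \<rho>" if "eigenvalue B c" for c
    unfolding \<rho>_def using fin that by (intro Max_ge) (auto simp: spectrum_def)
  have rho0: "0 \<le> \<rho>" unfolding \<rho>_def using fin by (intro Max_ge) auto
  have rho1: "\<rho> < 1" unfolding \<rho>_def using fin
    by (subst Max_less_iff) (auto simp: spectrum_def ev)
  define r where "r = (1 + \<rho>) / 2"
  have r0: "0 < r" and r1: "r < 1" and rr: "\<rho> < r" using rho0 rho1 by (auto simp: r_def)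
  \<comment> \<open>Rescaling by \<open>1/r\<close> moves the spectrum strictly inside the disc, where powers are bounded.\<close>
  define B' where "B' = (complex_of_real (1/r)) \<cdot>\<^sub>m B"
  have B': "B' \<in> carrier_mat n n" using B by (simp add: B'_def)
  have BB': "B = complex_of_real r \<cdot>\<^sub>m B'"
    unfolding B'_def using r0 B by (intro eq_matI) auto
  obtain bs where cB': "char_poly B' = (\<Prod>a\<leftarrow>bs. [:- a, 1:])"
    using char_poly_factorized[OF B'] by auto
  have bs_lt: "norm b < 1" if "b \<in> set bs" for b
  proof -
    have "poly (char_poly B') b = 0" using linear_poly_root[OF that] cB' by simp
    then have "b \<in> spectrum B'" using spectrum_root_char_poly[OF B'] by auto
    then obtain v where v: "v \<in> carrier_vec n" "v \<noteq> 0\<^sub>v n" "B' *\<^sub>v v = b \<cdot>\<^sub>v v"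
      unfolding spectrum_def eigenvalue_def eigenvector_def using B' by auto
    have "B *\<^sub>v v = complex_of_real r \<cdot>\<^sub>v (B' *\<^sub>v v)"
      unfolding BB' using v(1) B'
      by (intro eq_vecI) (auto simp: scalar_prod_def sum_distrib_left ac_simps)
    then have "B *\<^sub>v v = (complex_of_real r * b) \<cdot>\<^sub>v v" using v(3) by (simp add: smult_smult_assoc)
    then have "eigenvalue B (complex_of_real r * b)"
      unfolding eigenvalue_def eigenvector_def using v B by auto
    then have "cmod (complex_of_real r * b) \<le> \<rho>" by (rule rho_ge)
    then have "r * cmod b \<le> \<rho>" using r0 by (simp add: norm_mult)
    then have "r * cmod b < r * 1" using rr by simp
    then show ?thesis using r0 by (simp add: mult_less_cancel_left_pos)
  qed
  obtain c1 c2 where bnd: "\<And>k. norm_bound (B' ^\<^sub>m k) (c1 + c2 * of_nat k ^ (0 - 1))"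
    using factored_char_poly_norm_bound_cof[OF B' cB', of 0] bs_lt by force
  have pw: "B ^\<^sub>m k = (complex_of_real r ^ k) \<cdot>\<^sub>m (B' ^\<^sub>m k)" for k
  proof (induct k)
    case 0 show ?case using B' BB' by (intro eq_matI) auto
  next
    case (Suc k)
    have "B ^\<^sub>m Suc k = (complex_of_real r ^ k \<cdot>\<^sub>m B' ^\<^sub>m k) * (complex_of_real r \<cdot>\<^sub>m B')"
      using Suc BB' by simp
    also have "\<dots> = (complex_of_real r ^ Suc k) \<cdot>\<^sub>m (B' ^\<^sub>m k * B')"
      using B' by (intro eq_matI) (auto simp: scalar_prod_def sum_distrib_left ac_simps)
    finally show ?case by simp
  qed
  show ?thesis
  proof (rule exI[of _ "c1 + c2"], rule exI[of _ r], intro conjI r0 r1 allI impI)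
    fix k i j assume ij: "i < n" "j < n"
    have "(B ^\<^sub>m k) $$ (i,j) = complex_of_real r ^ k * (B' ^\<^sub>m k) $$ (i,j)"
      unfolding pw using ij B' by simp
    moreover have "cmod ((B' ^\<^sub>m k) $$ (i,j)) \<le> c1 + c2"
      using bnd[of k] ij B' unfolding norm_bound_def by auto
    ultimately show "cmod ((B ^\<^sub>m k) $$ (i,j)) \<le> (c1 + c2) * r ^ k"
      using r0 by (simp add: norm_mult norm_power mult.commute mult_left_mono)
  qed
qed

text \<open>To use the spectral bounds of the Jordan normal form library, square matrices over a
  finite index type are transported to its matrix type along an arbitrary enumeration.\<close>

definition enum_index :: "nat \<Rightarrow> 'n::finite" where
  "enum_index = (SOME h. bij_betw h {0..<CARD('n)} (UNIV::'n set))"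

lemma bij_betw_enum_index: "bij_betw (enum_index :: nat \<Rightarrow> 'n::finite) {0..<CARD('n)} UNIV"
proof -
  have "\<exists>h. bij_betw h {0..<CARD('n)} (UNIV::'n set)"
    using ex_bij_betw_nat_finite[of "UNIV::'n set"] by simp
  then show ?thesis unfolding enum_index_def by (rule someI_ex)
qed

lemma sum_UNIV_enum_index: "(\<Sum>t\<in>UNIV. f t) = (\<Sum>l = 0..<CARD('n::finite). f (enum_index l :: 'n))"
  using sum.reindex_bij_betw[OF bij_betw_enum_index, of f] by simp

lemma enum_index_surj: "\<exists>l < CARD('n::finite). enum_index l = (t::'n)"
proof -
  have "t \<in> enum_index ` {0..<CARD('n)}"
    using bij_betw_enum_index[where 'n='n] unfolding bij_betw_def by simp
  then show ?thesis by auto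
qed

lemma enum_index_eq_iff:
  "i < CARD('n::finite) \<Longrightarrow> j < CARD('n) \<Longrightarrow> (enum_index i :: 'n) = enum_index j \<longleftrightarrow> i = j"
  using bij_betw_enum_index[where 'n='n] unfolding bij_betw_def inj_on_def by auto

definition to_jnf :: "complex^'n^'n \<Rightarrow> complex Matrix.mat" where
  "to_jnf A = Matrix.mat CARD('n) CARD('n) (\<lambda>(i,j). A $ enum_index i $ enum_index j)"

lemma to_jnf_carrier: "to_jnf (A::complex^'n^'n) \<in> carrier_mat CARD('n) CARD('n)"
  by (simp add: to_jnf_def)

lemma to_jnf_mult: "to_jnf ((A::complex^'n^'n) ** B) = to_jnf A * to_jnf B"
  by (rule eq_matI) (auto simp: to_jnf_def matrix_matrix_mult_def scalar_prod_def sum_UNIV_enum_index)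

lemma to_jnf_mpow: "to_jnf (mpow (A::complex^'n^'n) k) = to_jnf A ^\<^sub>m k"
proof (induct k)
  case 0
  show ?case by (rule eq_matI) (auto simp: to_jnf_def mat_nth enum_index_eq_iff)
next
  case (Suc k)
  show ?case by (simp only: mpow_Suc_right to_jnf_mult Suc pow_mat.simps)
qed

lemma stable_eigenvalue_to_jnf:
  assumes "stable (A::complex^'n^'n)" "eigenvalue (to_jnf A) c"
  shows "cmod c < 1"
proof -
  obtain v where v: "v \<in> carrier_vec CARD('n)" "v \<noteq> 0\<^sub>v CARD('n)" "to_jnf A *\<^sub>v v = c \<cdot>\<^sub>v v"
    using assms(2) unfolding eigenvalue_def eigenvector_def by (auto simp: to_jnf_def)
  define w :: "complex^'n" where
    "w = (\<chi> t. vec_index v (the_inv_into {0..<CARD('n)} enum_index t))"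
  have w: "w $ enum_index l = vec_index v l" if "l < CARD('n)" for l
    unfolding w_def using that
      the_inv_into_f_f[OF bij_betw_imp_inj_on[OF bij_betw_enum_index[where 'n='n]]] by simp
  have "(A *v w) $ t = (c *s w) $ t" for t
  proof -
    obtain i where i: "i < CARD('n)" "enum_index i = t" using enum_index_surj by blast
    have "vec_index (to_jnf A *\<^sub>v v) i = vec_index (c \<cdot>\<^sub>v v) i" using v(3) by simp
    then have "(\<Sum>l = 0..<CARD('n). A $ t $ enum_index l * vec_index v l) = c * vec_index v i"
      using i v(1) by (simp add: to_jnf_def scalar_prod_def)
    moreover have "w $ t = vec_index v i" using w[OF i(1)] i(2) by simp
    ultimately show ?thesis
      by (simp add: matrix_vector_mult_def sum_UNIV_enum_index w)
  qed
  moreover have "w \<noteq> 0"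
  proof
    assume "w = 0"
    then have "v = 0\<^sub>v CARD('n)" using v(1) w by (intro eq_vecI) (auto simp: vec_eq_iff)
    then show False using v(2) by simp
  qed
  ultimately show ?thesis using assms(1) unfolding stable_def by (metis vec_eq_iff)
qed

lemma stable_mpow_entry_decay:
  assumes "stable (A::complex^'n^'n)"
  obtains K r where "0 < r" "r < 1" "\<And>k i j. cmod (mpow A k $ i $ j) \<le> K * r^k"
proof -
  obtain K r where Kr: "0 < r" "r < 1"
    "\<forall>k i j. i < CARD('n) \<longrightarrow> j < CARD('n) \<longrightarrow> cmod ((to_jnf A ^\<^sub>m k) $$ (i,j)) \<le> K * r^k"
    using jnf_mat_pow_entry_decay[OF to_jnf_carrier stable_eigenvalue_to_jnf[OF assms]] by metis
  show ?thesis
  proof (rule that[OF Kr(1,2)])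
    fix k and i j :: 'n
    obtain i' where i': "i' < CARD('n)" "enum_index i' = i" using enum_index_surj by blast
    obtain j' where j': "j' < CARD('n)" "enum_index j' = j" using enum_index_surj by blast
    have "(to_jnf A ^\<^sub>m k) $$ (i',j') = mpow A k $ i $ j"
      unfolding to_jnf_mpow[symmetric] using i' j' by (simp add: to_jnf_def)
    then show "cmod (mpow A k $ i $ j) \<le> K * r^k" using Kr(3) i'(1) j'(1) by metis
  qed
qed

lemma stable_mpow_norm_decay:
  assumes "stable (A::complex^'n^'n)"
  obtains K r where "0 \<le> K" "0 < r" "r < 1" "\<And>k. norm (mpow A k) \<le> K * r^k"
proof -
  obtain K r where Kr: "0 < r" "r < 1" "\<And>k i j. cmod (mpow A k $ i $ j) \<le> K * r^k"
    using stable_mpow_entry_decay[OF assms] by metis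
  define K' where "K' = of_nat (CARD('n) * CARD('n)) * \<bar>K\<bar>"
  have "norm (mpow A k) \<le> K' * r^k" for k
  proof -
    have "norm (mpow A k) \<le> of_nat (CARD('n) * CARD('n)) * (K * r^k)"
      by (rule norm_le_entry_bound) (rule Kr(3))
    also have "\<dots> \<le> K' * r^k" unfolding K'_def using Kr(1)
      by (simp add: mult.assoc mult_left_mono mult_right_mono)
    finally show ?thesis .
  qed
  then show ?thesis using Kr(1,2) by (intro that[of K' r]) (auto simp: K'_def)
qed

lemma summable_geometric_bound:
  fixes f :: "nat \<Rightarrow> 'a::banach"
  assumes "\<And>j. norm (f j) \<le> K * q^j" "0 \<le> q" "q < 1"
  shows "summable f"
proof (rule summable_comparison_test)
  show "\<exists>N. \<forall>n\<ge>N. norm (f n) \<le> K * q^n" using assms(1) by blast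
  show "summable (\<lambda>n. K * q^n)"
    using assms(2,3) by (intro summable_mult summable_geometric) simp
qed

section \<open>Power series of the transfer function\<close>

lemma neumann_series_sums:
  assumes "stable A" "cmod z < 1"
  shows "(\<lambda>j. mscale (z^j) (mpow A j)) sums matrix_inv (mat 1 - mat z ** A)"
proof -
  obtain K r where Kr: "0 \<le> K" "0 < r" "r < 1" "\<And>k. norm (mpow A k) \<le> K * r^k"
    using stable_mpow_norm_decay[OF assms(1)] by metis
  define c where "c = (of_nat (CARD('a) * CARD('a)) :: real)"
  have "summable (\<lambda>j. mscale (z^j) (mpow A j))"
  proof (rule summable_geometric_bound)
    fix j
    have "norm (mscale (z^j) (mpow A j)) \<le> c * (cmod z ^ j * norm (mpow A j))"
      using norm_mscale_le[of "z^j" "mpow A j"] by (simp add: c_def norm_power)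
    also have "\<dots> \<le> c * (cmod z ^ j * (K * r^j))"
      using Kr(4)[of j] by (intro mult_left_mono) (auto simp: c_def)
    also have "\<dots> = (c * K) * (cmod z * r)^j" by (simp add: power_mult_distrib ac_simps)
    finally show "norm (mscale (z^j) (mpow A j)) \<le> (c * K) * (cmod z * r)^j" .
    show "0 \<le> cmod z * r" using Kr by simp
    show "cmod z * r < 1" using Kr assms(2)
      by (metis less_eq_real_def mult_le_one mult_less_cancel_left1 norm_ge_zero not_le)
  qed
  then obtain S where S: "(\<lambda>j. mscale (z^j) (mpow A j)) sums S" by (auto simp: summable_def)
  \<comment> \<open>Shifting the series by one term gives \<open>S = I + z A S = I + z S A\<close>.\<close>
  have "(\<lambda>j. mscale z (A ** mscale (z^j) (mpow A j))) sums mscale z (A ** S)"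
    by (rule bounded_linear.sums[OF bounded_linear_mscale
          bounded_linear.sums[OF bounded_linear_matrix_mult_right S]])
  then have "(\<lambda>j. mscale (z^Suc j) (mpow A (Suc j))) sums mscale z (A ** S)"
    by (simp add: mscale_mult_right mscale_mscale)
  then have "(\<lambda>j. mscale (z^j) (mpow A j)) sums (mscale z (A ** S) + mat 1)"
    by (subst (asm) sums_Suc_iff) simp
  then have "S = mscale z (A ** S) + mat 1" using S sums_unique2 by blast
  then have S1: "S - mscale z (A ** S) = mat 1" by (metis add_diff_cancel_left')
  have "(\<lambda>j. mscale z (mscale (z^j) (mpow A j) ** A)) sums mscale z (S ** A)"
    by (rule bounded_linear.sums[OF bounded_linear_mscale
          bounded_linear.sums[OF bounded_linear_matrix_mult_left S]])
  then have "(\<lambda>j. mscale (z^Suc j) (mpow A (Suc j))) sums mscale z (S ** A)"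
    by (simp add: mscale_mult_left mscale_mscale mpow_Suc_right[symmetric])
  then have "(\<lambda>j. mscale (z^j) (mpow A j)) sums (mscale z (S ** A) + mat 1)"
    by (subst (asm) sums_Suc_iff) simp
  then have "S = mscale z (S ** A) + mat 1" using S sums_unique2 by blast
  then have S2: "S - mscale z (S ** A) = mat 1" by (metis add_diff_cancel_left')
  have "(mat 1 - mat z ** A) ** S = mat 1"
    using S1 by (simp add: matrix_mult_diff_right matrix_mul_assoc mat_mult_eq_mscale mscale_mult_left)
  moreover have "S ** (mat 1 - mat z ** A) = mat 1"
    using S2 by (simp add: matrix_mult_diff_left mat_mult_eq_mscale mscale_mult_right)
  ultimately show ?thesis using matrix_inv_eqI S by metis
qed

definition markov :: "complex^'k^'m \<Rightarrow> complex^'n^'m \<Rightarrow> complex^'n^'n \<Rightarrow> complex^'k^'n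
    \<Rightarrow> nat \<Rightarrow> complex^'k^'m" where
  "markov D C A B j = (if j = 0 then D else C ** mpow A (j - 1) ** B)"

lemma markov_0[simp]: "markov D C A B 0 = D"
  and markov_Suc[simp]: "markov D C A B (Suc j) = C ** mpow A j ** B"
  by (simp_all add: markov_def)

lemma transfer_sums_markov:
  assumes "stable A" "cmod z < 1"
  shows "(\<lambda>j. mscale (z^j) (markov D C A B j)) sums transfer D C A B z"
proof -
  let ?R = "matrix_inv (mat 1 - mat z ** A)"
  have "(\<lambda>j. mscale z ((C ** mscale (z^j) (mpow A j)) ** B)) sums mscale z ((C ** ?R) ** B)"
    by (rule bounded_linear.sums[OF bounded_linear_mscale
          bounded_linear.sums[OF bounded_linear_matrix_mult_left
          bounded_linear.sums[OF bounded_linear_matrix_mult_right neumann_series_sums[OF assms]]]])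
  then have "(\<lambda>j. mscale (z^Suc j) (markov D C A B (Suc j))) sums mscale z (C ** ?R ** B)"
    by (simp add: mscale_mult_left mscale_mult_right mscale_mscale)
  then have "(\<lambda>j. mscale (z^j) (markov D C A B j)) sums (mscale z (C ** ?R ** B) + D)"
    by (subst (asm) sums_Suc_iff) simp
  moreover have "transfer D C A B z = mscale z (C ** ?R ** B) + D"
    by (simp add: transfer_def mat_mult_eq_mscale mscale_mult_left add.commute)
  ultimately show ?thesis by simp
qed

lemma cadj_transfer_sums_markov:
  assumes "stable A" "cmod z < 1"
  shows "(\<lambda>j. mscale (cnj z ^ j) (cadj (markov D C A B j))) sums cadj (transfer D C A B z)"
  using bounded_linear.sums[OF bounded_linear_cadj transfer_sums_markov[OF assms]]
  by (simp add: cadj_mscale)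

lemma markov_gram_sums:
  fixes A :: "complex^'n^'n" and C :: "complex^'n^'m"
  assumes "stable A"
  shows "(\<lambda>j. cadj (markov D1 C A B1 j) ** markov D2 C A B2 j)
           sums (cadj D1 ** D2 + cadj B1 ** obs_gramian C A ** B2)"
proof -
  obtain K r where Kr: "0 \<le> K" "0 < r" "r < 1" "\<And>k. norm (mpow A k) \<le> K * r^k"
    using stable_mpow_norm_decay[OF assms(1)] by metis
  define T where "T = (\<lambda>\<nu>. mpow (cadj A) \<nu> ** cadj C ** C ** mpow A \<nu>)"
  define c0 where "c0 = (of_nat (CARD('n) * CARD('n)) :: real)"
  define c1 where "c1 = (of_nat (CARD('n) * CARD('m) * CARD('n)) :: real)"
  define c2 where "c2 = (of_nat (CARD('n) * CARD('n) * CARD('m)) :: real)"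
  define c3 where "c3 = (of_nat (CARD('n) * CARD('n) * CARD('n)) :: real)"
  have "summable T"
  proof (rule summable_geometric_bound)
    fix \<nu>
    have "norm (mpow (cadj A) \<nu>) \<le> c0 * (K * r^\<nu>)"
      unfolding cadj_mpow[symmetric] c0_def
      by (rule order_trans[OF norm_cadj_le]) (intro mult_left_mono Kr(4), simp)
    then have "norm (mpow (cadj A) \<nu> ** cadj C) \<le> c1 * ((c0 * (K * r^\<nu>)) * norm (cadj C))"
      unfolding c1_def by (rule norm_matrix_mult_le_bound) simp
    then have "norm (mpow (cadj A) \<nu> ** cadj C ** C)
                 \<le> c2 * ((c1 * ((c0 * (K * r^\<nu>)) * norm (cadj C))) * norm C)"
      unfolding c2_def by (rule norm_matrix_mult_le_bound) simp
    then have "norm (T \<nu>) \<le> c3 * ((c2 * ((c1 * ((c0 * (K * r^\<nu>)) * norm (cadj C))) * norm C)) * (K * r^\<nu>))"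
      unfolding c3_def T_def by (rule norm_matrix_mult_le_bound[OF _ Kr(4)])
    also have "\<dots> = (c3 * c2 * c1 * c0 * K * norm (cadj C) * norm C * K) * (r * r)^\<nu>"
      by (simp add: power_mult_distrib ac_simps)
    finally show "norm (T \<nu>) \<le> (c3 * c2 * c1 * c0 * K * norm (cadj C) * norm C * K) * (r * r)^\<nu>" .
    show "0 \<le> r * r" by simp
    show "r * r < 1" using Kr by (metis less_eq_real_def mult_le_one mult_less_cancel_left1 not_le)
  qed
  then have "T sums obs_gramian C A" unfolding obs_gramian_def T_def by (simp add: summable_sums)
  then have "(\<lambda>\<nu>. cadj B1 ** T \<nu> ** B2) sums (cadj B1 ** obs_gramian C A ** B2)"
    by (rule bounded_linear.sums[OF bounded_linear_matrix_mult_left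
          bounded_linear.sums[OF bounded_linear_matrix_mult_right]])
  moreover have "cadj B1 ** T j ** B2 = cadj (markov D1 C A B1 (Suc j)) ** markov D2 C A B2 (Suc j)" for j
    by (simp add: T_def cadj_mult cadj_mpow matrix_mul_assoc)
  ultimately have "(\<lambda>j. cadj (markov D1 C A B1 (Suc j)) ** markov D2 C A B2 (Suc j))
                    sums (cadj B1 ** obs_gramian C A ** B2)"
    by simp
  then have "(\<lambda>j. cadj (markov D1 C A B1 j) ** markov D2 C A B2 j)
               sums (cadj B1 ** obs_gramian C A ** B2 + cadj D1 ** D2)"
    by (subst (asm) sums_Suc_iff) simp
  then show ?thesis by (simp add: add.commute)
qed

lemma powser_eq_0_coeff:
  fixes a :: "nat \<Rightarrow> complex"
  assumes "\<And>w. cmod w < 1 \<Longrightarrow> (\<lambda>i. a i * w^i) sums 0"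
  shows "a m = 0"
proof (cases "m = 0")
  case True
  then show ?thesis using assms[of 0] by (simp add: powser_sums_zero_iff)
next
  case False
  show ?thesis
  proof (rule ccontr)
    assume am: "a m \<noteq> 0"
    have sm: "\<And>x. norm (x - 0) < 1 \<Longrightarrow> (\<lambda>n. a n * (x - 0) ^ n) sums ((\<lambda>_. 0::complex) x)"
      using assms by simp
    \<comment> \<open>A nonzero coefficient would make the sum nonzero near, but not at, the origin.\<close>
    show False
    proof (rule powser_0_nonzero[of 1 0 a "\<lambda>_. 0::complex" m, OF _ sm _ am])
      fix s :: real
      assume "0 < s" and nz: "\<And>z::complex. z \<in> cball 0 s - {0} \<Longrightarrow> (\<lambda>_. 0::complex) z \<noteq> 0"
      show False using nz[of "complex_of_real s"] \<open>0 < s\<close> by (simp add: dist_norm)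
    qed (use False in auto)
  qed
qed

lemma matrix_powser_eq_0_coeff:
  assumes "\<And>w. cmod w < 1 \<Longrightarrow> (\<lambda>i. mscale (w^i) (c i)) sums (0::complex^'b^'a)"
  shows "c m = 0"
proof -
  have "c m $ p $ q = 0" for p q
  proof (rule powser_eq_0_coeff[where a="\<lambda>i. c i $ p $ q"])
    fix w :: complex assume "cmod w < 1"
    from bounded_linear.sums[OF bounded_linear_entry[of p q] assms[OF this]]
    show "(\<lambda>i. c i $ p $ q * w ^ i) sums 0" by (simp add: mult.commute)
  qed
  then show ?thesis by (simp add: vec_eq_iff)
qed

lemma markov_outer_eq:
  fixes A :: "complex^'n^'n" and C :: "complex^'n^'m"
    and BM :: "complex^'k^'n" and BN :: "complex^'l^'n"
    and DM :: "complex^'k^'m" and DN :: "complex^'l^'m"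
  assumes st: "stable A"
    and hyp: "\<forall>z\<in>ball 0 1. \<forall>w\<in>ball 0 1.
           transfer DM C A BM w ** cadj (transfer DM C A BM z)
         = transfer DN C A BN w ** cadj (transfer DN C A BN z)"
  shows "markov DM C A BM i ** cadj (markov DM C A BM j) = markov DN C A BN i ** cadj (markov DN C A BN j)"
proof -
  let ?M = "markov DM C A BM" and ?N = "markov DN C A BN"
  have coeff_w: "?M i ** cadj (transfer DM C A BM z) = ?N i ** cadj (transfer DN C A BN z)"
    if z: "cmod z < 1" for z i
  proof -
    let ?XM = "cadj (transfer DM C A BM z)" and ?XN = "cadj (transfer DN C A BN z)"
    have "?M i ** ?XM - ?N i ** ?XN = 0"
    proof (rule matrix_powser_eq_0_coeff[where c = "\<lambda>i. ?M i ** ?XM - ?N i ** ?XN"])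
      fix w :: complex assume w: "cmod w < 1"
      have "(\<lambda>i. mscale (w^i) (?M i) ** ?XM - mscale (w^i) (?N i) ** ?XN)
            sums (transfer DM C A BM w ** ?XM - transfer DN C A BN w ** ?XN)"
        by (intro sums_diff bounded_linear.sums[OF bounded_linear_matrix_mult_left]
            transfer_sums_markov st w)
      then show "(\<lambda>i. mscale (w^i) (?M i ** ?XM - ?N i ** ?XN)) sums 0"
        using hyp w z by (simp add: mscale_mult_left mscale_diff)
    qed
    then show ?thesis by simp
  qed
  have "?M i ** cadj (?M j) - ?N i ** cadj (?N j) = 0"
  proof (rule matrix_powser_eq_0_coeff[where c = "\<lambda>j. ?M i ** cadj (?M j) - ?N i ** cadj (?N j)"])
    fix u :: complex assume u: "cmod u < 1"
    then have z: "cmod (cnj u) < 1" by simp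
    have "(\<lambda>j. ?M i ** mscale (cnj (cnj u) ^ j) (cadj (?M j)) - ?N i ** mscale (cnj (cnj u) ^ j) (cadj (?N j)))
          sums (?M i ** cadj (transfer DM C A BM (cnj u)) - ?N i ** cadj (transfer DN C A BN (cnj u)))"
      by (intro sums_diff bounded_linear.sums[OF bounded_linear_matrix_mult_right]
          cadj_transfer_sums_markov st z)
    then show "(\<lambda>j. mscale (u^j) (?M i ** cadj (?M j) - ?N i ** cadj (?N j))) sums 0"
      using coeff_w[OF z, of i] by (simp add: mscale_mult_right mscale_diff)
  qed
  then show ?thesis by simp
qed

section \<open>Inner products and the Moore--Penrose inverse\<close>

lemma matrix_vector_mult_scale: "(A::complex^'b^'a) *v (c *s x) = c *s (A *v x)"
  by (simp add: vec_eq_iff matrix_vector_mult_def sum_distrib_left ac_simps)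

lemma matrix_vector_mult_scaleR: "(A::complex^'b^'a) *v (r *\<^sub>R x) = r *\<^sub>R (A *v x)"
  by (simp add: vec_eq_iff matrix_vector_mult_def scaleR_sum_right)

lemma cinner_cadj: "cinner ((M::complex^'b^'a) *v x) y = cinner x (cadj M *v y)"
proof -
  have "cinner (M *v x) y = (\<Sum>i\<in>UNIV. \<Sum>j\<in>UNIV. M $ i $ j * x $ j * cnj (y $ i))"
    by (simp add: cinner_def matrix_vector_mult_def sum_distrib_right)
  also have "\<dots> = (\<Sum>j\<in>UNIV. \<Sum>i\<in>UNIV. M $ i $ j * x $ j * cnj (y $ i))"
    by (rule sum.swap)
  also have "\<dots> = cinner x (cadj M *v y)"
    by (simp add: cinner_def matrix_vector_mult_def sum_distrib_left ac_simps)
  finally show ?thesis .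
qed

lemma cinner_diff_left: "cinner (x - y) z = cinner x z - cinner y z"
  by (simp add: cinner_def left_diff_distrib sum_subtractf)

lemma cinner_diff_right: "cinner z (x - y) = cinner z x - cinner z y"
  by (simp add: cinner_def right_diff_distrib sum_subtractf)

lemma cinner_scale_right: "cinner x (c *s y) = cnj c * cinner x y"
  by (simp add: cinner_def sum_distrib_left ac_simps)

lemma cinner_zero[simp]: "cinner 0 x = 0" "cinner x 0 = 0"
  by (simp_all add: cinner_def)

lemma cinner_self: "cinner x x = complex_of_real ((norm x)^2)"
proof -
  have "cinner x x = (\<Sum>i\<in>UNIV. complex_of_real ((cmod (x $ i))^2))"
    unfolding cinner_def by (intro sum.cong refl) (rule complex_norm_square[symmetric])
  also have "\<dots> = complex_of_real ((norm x)^2)"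
    by (simp add: norm_vec_def L2_set_def sum_nonneg)
  finally show ?thesis .
qed

lemma cinner_self_eq_0: "cinner x x = 0 \<longleftrightarrow> x = 0"
  by (simp add: cinner_self)

lemma inner_eq_Re_cinner: "inner x y = Re (cinner x (y::complex^'n))"
  by (simp add: inner_vec_def cinner_def inner_complex_def Re_sum)

lemma cadj_eq_if_cinner_symmetric:
  assumes "\<And>x y. cinner ((M::complex^'a^'a) *v x) y = cinner x (M *v y)"
  shows "cadj M = M"
proof -
  have "(cadj M - M) *v y = 0" for y
  proof -
    have "cinner x ((cadj M - M) *v y) = 0" for x
      using assms[of x y] by (simp add: matrix_vector_mult_diff_rdistrib cinner_diff_right cinner_cadj)
    from this[of "(cadj M - M) *v y"] show ?thesis by (simp add: cinner_self_eq_0)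
  qed
  then have "cadj M - M = 0" by (simp add: matrix_eq)
  then show ?thesis by simp
qed

lemma partial_isometryI:
  assumes "U ** (cadj U ** U) = U"
  shows "partial_isometry U"
  unfolding partial_isometry_def
proof (intro allI impI)
  fix x assume orth: "\<forall>y. U *v y = 0 \<longrightarrow> cinner x y = 0"
  have "U *v (x - (cadj U ** U) *v x) = 0"
    using assms by (simp add: matrix_vector_mult_diff_distrib matrix_vector_mul_assoc)
  then have "cinner x (x - (cadj U ** U) *v x) = 0" using orth by blast
  then have "cinner x x = cinner x (cadj U *v (U *v x))"
    by (simp add: cinner_diff_right matrix_vector_mul_assoc)
  also have "\<dots> = cinner (U *v x) (U *v x)" by (simp add: cinner_cadj)
  finally have "complex_of_real ((norm x)^2) = complex_of_real ((norm (U *v x))^2)"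
    by (simp add: cinner_self)
  then have "(norm x)^2 = (norm (U *v x))^2" using of_real_eq_iff by blast
  then show "norm (U *v x) = norm x" by (simp add: power2_eq_iff_nonneg)
qed

definition penrose :: "complex^'n^'m \<Rightarrow> complex^'m^'n \<Rightarrow> bool" where
  "penrose A X \<longleftrightarrow> A ** X ** A = A \<and> X ** A ** X = X \<and> cadj (A ** X) = A ** X \<and> cadj (X ** A) = X ** A"

lemma penrose_unique:
  assumes X: "penrose A X" and Y: "penrose A Y"
  shows "X = Y"
proof -
  have X1: "A ** X ** A = A" and X2: "X ** A ** X = X"
    and X3: "cadj (A ** X) = A ** X" and X4: "cadj (X ** A) = X ** A"
    using X by (auto simp: penrose_def)
  have Y1: "A ** Y ** A = A" and Y2: "Y ** A ** Y = Y"
    and Y3: "cadj (A ** Y) = A ** Y" and Y4: "cadj (Y ** A) = Y ** A"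
    using Y by (auto simp: penrose_def)
  have cA1: "cadj A = cadj A ** cadj (A ** Y)"
    using arg_cong[OF Y1, of cadj] by (simp add: cadj_mult matrix_mul_assoc)
  have cA2: "cadj A = cadj (X ** A) ** cadj A"
    using arg_cong[OF X1, of cadj] by (simp add: cadj_mult matrix_mul_assoc)
  have "X = X ** (A ** X)" using X2 by (simp add: matrix_mul_assoc)
  also have "\<dots> = X ** cadj (A ** X)" using X3 by simp
  also have "\<dots> = X ** cadj X ** cadj A" by (simp add: cadj_mult matrix_mul_assoc)
  also have "\<dots> = X ** cadj X ** (cadj A ** cadj (A ** Y))" using cA1 by simp
  also have "\<dots> = X ** cadj (A ** X) ** cadj (A ** Y)" by (simp add: cadj_mult matrix_mul_assoc)
  also have "\<dots> = X ** (A ** X) ** (A ** Y)" using X3 Y3 by simp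
  also have "\<dots> = X ** A ** Y" using X2 by (simp add: matrix_mul_assoc)
  finally have XAY: "X = X ** A ** Y" .
  have "Y = cadj (Y ** A) ** Y" using Y2 Y4 by (simp add: matrix_mul_assoc)
  also have "\<dots> = (cadj (X ** A) ** cadj A) ** cadj Y ** Y" using cA2 by (simp add: cadj_mult)
  also have "\<dots> = cadj (X ** A) ** cadj (Y ** A) ** Y" by (simp add: cadj_mult matrix_mul_assoc)
  also have "\<dots> = (X ** A) ** (Y ** A) ** Y" using X4 Y4 by simp
  also have "\<dots> = X ** A ** (Y ** A ** Y)" by (simp add: matrix_mul_assoc)
  also have "\<dots> = X ** A ** Y" using Y2 by simp
  finally show ?thesis using XAY by simp
qed

lemma penrose_mp_inverse:
  assumes "penrose A X"
  shows "penrose A (mp_inverse A)"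
proof -
  have "\<exists>!X. penrose A X" by (rule ex1I[where P="penrose A", OF assms]) (rule penrose_unique[OF _ assms])
  then have "penrose A (THE X. penrose A X)" by (rule theI')
  then show ?thesis unfolding mp_inverse_def penrose_def[abs_def] by simp
qed

text \<open>For a Hermitian \<open>G\<close> the range and kernel are orthogonal complements. The inverse
  is built pointwise: \<open>G\<^sup>+ y\<close> is the unique \<open>u\<close> in the range of \<open>G\<close> such that \<open>G u\<close>
  is the orthogonal projection of \<open>y\<close> onto that range.\<close>

context
  fixes G :: "complex^'n^'n"
  assumes hermitian: "cadj G = G"
begin

lemma hermitian_cinner: "cinner (G *v x) y = cinner x (G *v y)"
  using cinner_cadj[of G x y] hermitian by simp

lemma hermitian_kernel_square: "G *v (G *v a) = 0 \<Longrightarrow> G *v a = 0"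
  using hermitian_cinner[of a "G *v a"] by (simp add: cinner_self_eq_0)

lemma hermitian_range_kernel_decomp: "\<exists>a q. y = G *v a + q \<and> G *v q = 0"
proof -
  define V where "V = range (\<lambda>a. G *v a)"
  have "real_vector.subspace V" unfolding real_vector.subspace_def V_def
  proof (intro conjI ballI allI)
    show "0 \<in> range ((*v) G)" by (metis matrix_vector_mult_0_right rangeI)
    fix x y assume "x \<in> range ((*v) G)" "y \<in> range ((*v) G)"
    then obtain a b where "x = G *v a" "y = G *v b" by auto
    then show "x + y \<in> range ((*v) G)" by (metis matrix_vector_right_distrib rangeI)
  next
    fix c :: real and x assume "x \<in> range ((*v) G)"
    then obtain a where "x = G *v a" by auto
    then show "c *\<^sub>R x \<in> range ((*v) G)" by (metis matrix_vector_mult_scaleR rangeI)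
  qed
  then have spanV: "real_vector.span V = V" by simp
  obtain p q where pq: "p \<in> real_vector.span V" "\<And>w. w \<in> real_vector.span V \<Longrightarrow> orthogonal q w"
    "y = p + q"
    using orthogonal_subspace_decomp_exists[of V y] by metis
  have Re0: "Re (cinner q (G *v w)) = 0" for w
    using pq(2)[of "G *v w"] spanV
    unfolding V_def Linear_Algebra.orthogonal_def by (simp add: inner_eq_Re_cinner)
  \<comment> \<open>Real orthogonality to a complex subspace is complex orthogonality: test with \<open>\<i> w\<close> too.\<close>
  have "cinner q (G *v w) = 0" for w
  proof (rule complex_eqI)
    show "Re (cinner q (G *v w)) = Re 0" using Re0 by simp
    have "Re (cinner q (G *v (\<i> *s w))) = 0" by (rule Re0)
    then show "Im (cinner q (G *v w)) = Im 0"
      by (simp add: matrix_vector_mult_scale cinner_scale_right)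
  qed
  then have "cinner (G *v q) w = 0" for w by (simp add: hermitian_cinner)
  then have Gq: "G *v q = 0" using cinner_self_eq_0 by blast
  from pq(1) spanV obtain a where "p = G *v a" unfolding V_def by auto
  then show ?thesis using pq(3) Gq by blast
qed

definition pinv_spec :: "complex^'n \<Rightarrow> complex^'n \<Rightarrow> bool" where
  "pinv_spec y u \<longleftrightarrow> u \<in> range (\<lambda>a. G *v a) \<and> G *v (y - G *v u) = 0"

lemma pinv_spec_exists: "\<exists>u. pinv_spec y u"
proof -
  obtain a q where aq: "y = G *v a + q" "G *v q = 0" using hermitian_range_kernel_decomp by blast
  obtain b q' where bq: "a = G *v b + q'" "G *v q' = 0" using hermitian_range_kernel_decomp by blast
  have "G *v (G *v b) = G *v a" using bq by (simp add: matrix_vector_right_distrib)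
  then have "pinv_spec y (G *v b)" unfolding pinv_spec_def using aq
    by (simp add: matrix_vector_right_distrib matrix_vector_mult_diff_distrib)
  then show ?thesis by blast
qed

lemma pinv_spec_unique:
  assumes "pinv_spec y u1" "pinv_spec y u2"
  shows "u1 = u2"
proof -
  obtain a1 a2 where a: "u1 = G *v a1" "u2 = G *v a2"
    using assms unfolding pinv_spec_def by auto
  have "G *v (G *v (u1 - u2)) = 0"
    using assms unfolding pinv_spec_def by (simp add: matrix_vector_mult_diff_distrib)
  then have "G *v (G *v (G *v (a1 - a2))) = 0" using a by (simp add: matrix_vector_mult_diff_distrib)
  then have "G *v (G *v (a1 - a2)) = 0" by (rule hermitian_kernel_square)
  then have "G *v (a1 - a2) = 0" by (rule hermitian_kernel_square)
  then show ?thesis using a by (simp add: matrix_vector_mult_diff_distrib)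
qed

definition pinv_fun :: "complex^'n \<Rightarrow> complex^'n" where
  "pinv_fun y = (SOME u. pinv_spec y u)"

lemma pinv_spec_pinv_fun: "pinv_spec y (pinv_fun y)"
  unfolding pinv_fun_def using pinv_spec_exists by (rule someI_ex)

lemma pinv_fun_eqI: "pinv_spec y u \<Longrightarrow> pinv_fun y = u"
  using pinv_spec_pinv_fun pinv_spec_unique by blast

lemma pinv_fun_add: "pinv_fun (y1 + y2) = pinv_fun y1 + pinv_fun y2"
proof (rule pinv_fun_eqI)
  obtain a1 where a1: "pinv_fun y1 = G *v a1" "G *v (y1 - G *v pinv_fun y1) = 0"
    using pinv_spec_pinv_fun[of y1] unfolding pinv_spec_def by auto
  obtain a2 where a2: "pinv_fun y2 = G *v a2" "G *v (y2 - G *v pinv_fun y2) = 0"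
    using pinv_spec_pinv_fun[of y2] unfolding pinv_spec_def by auto
  have "pinv_fun y1 + pinv_fun y2 = G *v (a1 + a2)"
    using a1 a2 by (simp add: matrix_vector_right_distrib)
  moreover have "G *v (y1 + y2 - G *v (pinv_fun y1 + pinv_fun y2))
      = G *v (y1 - G *v pinv_fun y1) + G *v (y2 - G *v pinv_fun y2)"
    by (simp add: matrix_vector_right_distrib matrix_vector_mult_diff_distrib algebra_simps)
  ultimately show "pinv_spec (y1 + y2) (pinv_fun y1 + pinv_fun y2)"
    unfolding pinv_spec_def using a1 a2 by simp
qed

lemma pinv_fun_scale: "pinv_fun (c *s y) = c *s pinv_fun y"
proof (rule pinv_fun_eqI)
  obtain a where a: "pinv_fun y = G *v a" "G *v (y - G *v pinv_fun y) = 0"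
    using pinv_spec_pinv_fun[of y] unfolding pinv_spec_def by auto
  have "c *s pinv_fun y = G *v (c *s a)" using a by (simp add: matrix_vector_mult_scale)
  moreover have "G *v (c *s y - G *v (c *s pinv_fun y)) = c *s (G *v (y - G *v pinv_fun y))"
    by (simp add: matrix_vector_mult_scale matrix_vector_mult_diff_distrib vector_ssub_ldistrib)
  ultimately show "pinv_spec (c *s y) (c *s pinv_fun y)" unfolding pinv_spec_def using a by simp
qed

lemma linear_pinv_fun: "Vector_Spaces.linear (*s) (*s) pinv_fun"
  by unfold_locales (simp_all add: pinv_fun_add pinv_fun_scale)

lemma cinner_projection_symmetric:
  assumes "\<And>x. f x \<in> range (\<lambda>a. G *v a) \<and> G *v (x - f x) = 0"
  shows "cinner (f x) y = cinner x (f y)"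
proof -
  obtain a where a: "f x = G *v a" using assms[of x] by auto
  obtain b where b: "f y = G *v b" using assms[of y] by auto
  have "cinner (f x) (y - f y) = 0"
    using a assms[of y] hermitian_cinner[of a "y - f y"] by simp
  moreover have "cinner (x - f x) (f y) = 0"
    using b assms[of x] hermitian_cinner[of "x - f x" b] by simp
  ultimately show ?thesis by (simp add: cinner_diff_left cinner_diff_right)
qed

lemma hermitian_penrose_exists: "\<exists>X. penrose G X"
proof -
  define X where "X = matrix pinv_fun"
  have X: "X *v y = pinv_fun y" for y
    unfolding X_def by (rule matrix_works[OF linear_pinv_fun])
  have ker: "G *v (v - pinv_fun (G *v v)) = 0" for v
  proof -
    have "G *v (G *v (v - pinv_fun (G *v v))) = 0"
      using pinv_spec_pinv_fun[of "G *v v"] unfolding pinv_spec_def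
      by (simp add: matrix_vector_mult_diff_distrib)
    then show ?thesis by (rule hermitian_kernel_square)
  qed
  have GXG: "G *v (pinv_fun (G *v v)) = G *v v" for v
    using ker[of v] by (simp add: matrix_vector_mult_diff_distrib)
  have XGX: "pinv_fun (G *v pinv_fun y) = pinv_fun y" for y
    by (rule pinv_fun_eqI) (use pinv_spec_pinv_fun[of y] in \<open>simp add: pinv_spec_def\<close>)
  have proj_GX: "\<And>x. G *v pinv_fun x \<in> range (\<lambda>a. G *v a) \<and> G *v (x - G *v pinv_fun x) = 0"
    using pinv_spec_pinv_fun unfolding pinv_spec_def by auto
  have proj_XG: "\<And>x. pinv_fun (G *v x) \<in> range (\<lambda>a. G *v a) \<and> G *v (x - pinv_fun (G *v x)) = 0"
    using pinv_spec_pinv_fun ker unfolding pinv_spec_def by auto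
  have "penrose G X"
    unfolding penrose_def
  proof (intro conjI)
    show "G ** X ** G = G" by (simp add: matrix_eq matrix_vector_mul_assoc[symmetric] X GXG)
    show "X ** G ** X = X" by (simp add: matrix_eq matrix_vector_mul_assoc[symmetric] X XGX)
    show "cadj (G ** X) = G ** X"
      by (rule cadj_eq_if_cinner_symmetric)
         (simp add: matrix_vector_mul_assoc[symmetric] X cinner_projection_symmetric[OF proj_GX])
    show "cadj (X ** G) = X ** G"
      by (rule cadj_eq_if_cinner_symmetric)
         (simp add: matrix_vector_mul_assoc[symmetric] X cinner_projection_symmetric[OF proj_XG])
  qed
  then show ?thesis by blast
qed

lemma penrose_hermitian_mp_inverse: "penrose G (mp_inverse G)"
  using hermitian_penrose_exists penrose_mp_inverse by blast

lemma cadj_mp_inverse_hermitian: "cadj (mp_inverse G) = mp_inverse G"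
proof -
  let ?X = "mp_inverse G"
  have P1: "G ** ?X ** G = G" and P2: "?X ** G ** ?X = ?X"
    and P3: "cadj (G ** ?X) = G ** ?X" and P4: "cadj (?X ** G) = ?X ** G"
    using penrose_hermitian_mp_inverse by (auto simp: penrose_def)
  have GcX: "G ** cadj ?X = ?X ** G" using P4 hermitian by (simp add: cadj_mult)
  have cXG: "cadj ?X ** G = G ** ?X" using P3 hermitian by (simp add: cadj_mult)
  have "penrose G (cadj ?X)" unfolding penrose_def
  proof (intro conjI)
    show "G ** cadj ?X ** G = G"
      using arg_cong[OF P1, of cadj] hermitian by (simp add: cadj_mult matrix_mul_assoc)
    show "cadj ?X ** G ** cadj ?X = cadj ?X"
      using arg_cong[OF P2, of cadj] hermitian by (simp add: cadj_mult matrix_mul_assoc)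
    show "cadj (G ** cadj ?X) = G ** cadj ?X" using GcX P4 by simp
    show "cadj (cadj ?X ** G) = cadj ?X ** G" using cXG P3 by simp
  qed
  then show ?thesis by (rule penrose_unique[OF _ penrose_hermitian_mp_inverse])
qed

lemma mp_inverse_hermitian_commute: "G ** mp_inverse G = mp_inverse G ** G"
proof -
  have "G ** mp_inverse G = cadj (G ** mp_inverse G)"
    using penrose_hermitian_mp_inverse unfolding penrose_def by (elim conjE) (rule sym)
  also have "\<dots> = mp_inverse G ** G"
    by (simp add: cadj_mult cadj_mp_inverse_hermitian hermitian)
  finally show ?thesis .
qed

end

lemma sums_cadj_mult_self_eq_0:
  assumes "(\<lambda>j. cadj (X j) ** X j) sums (0::complex^'b^'b)"
  shows "X j = 0"
proof -
  have "X j $ k $ a = 0" for k a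
  proof -
    have diag: "(cadj (X j) ** X j) $ a $ a = complex_of_real (\<Sum>k\<in>UNIV. (cmod (X j $ k $ a))^2)" for j
      unfolding matrix_matrix_mult_nth cadj_nth of_real_sum
      by (intro sum.cong refl) (metis complex_norm_square mult.commute of_real_power)
    have "(\<lambda>j. Re ((cadj (X j) ** X j) $ a $ a)) sums 0"
      using bounded_linear.sums[OF bounded_linear_Re bounded_linear.sums[OF bounded_linear_entry assms]]
      by simp
    then have s: "(\<lambda>j. \<Sum>k\<in>UNIV. (cmod (X j $ k $ a))^2) sums 0" by (simp add: diag)
    have "(\<Sum>k\<in>UNIV. (cmod (X j $ k $ a))^2) = 0"
      using suminf_eq_zero_iff[OF sums_summable[OF s]] sums_unique[OF s]
      by (simp add: sum_nonneg)
    then show ?thesis by (subst (asm) sum_nonneg_eq_0_iff) auto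
  qed
  then show ?thesis by (simp add: vec_eq_iff)
qed

lemma mult_cadj_self_eq_0:
  assumes "X ** cadj X = (0::complex^'a^'a)"
  shows "X = 0"
proof -
  have "(\<lambda>j. cadj (cadj X) ** cadj X) sums 0" using assms by simp
  then have "cadj X = 0" by (rule sums_cadj_mult_self_eq_0)
  then show ?thesis by (metis cadj_cadj cadj_zero)
qed

text \<open>\<open>M\<close> and \<open>N\<close> stand for the sequences of Markov parameters, \<open>G\<close> and \<open>H\<close> for the two
  factors of \<open>U\<close>.\<close>

context
  fixes M :: "nat \<Rightarrow> complex^'k^'m" and N :: "nat \<Rightarrow> complex^'l^'m"
    and G :: "complex^'k^'k" and H :: "complex^'l^'k"
  assumes G_sums: "(\<lambda>j. cadj (M j) ** M j) sums G"
    and H_sums: "(\<lambda>j. cadj (M j) ** N j) sums H"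
    and outer_eq: "\<And>i j. M i ** cadj (M j) = N i ** cadj (N j)"
begin

lemma gram_hermitian: "cadj G = G"
proof -
  have "(\<lambda>j. cadj (cadj (M j) ** M j)) sums cadj G"
    by (rule bounded_linear.sums[OF bounded_linear_cadj G_sums])
  then show ?thesis using G_sums sums_unique2 by (simp add: cadj_mult)
qed

lemma M_mult_gram_projection: "M i ** (mp_inverse G ** G) = M i"
proof -
  define F where "F = mat 1 - mp_inverse G ** G"
  have "G ** F = 0"
    using penrose_hermitian_mp_inverse[OF gram_hermitian]
    by (simp add: F_def matrix_mult_diff_left penrose_def matrix_mul_assoc)
  then have "cadj F ** G ** F = 0" by (simp add: matrix_mul_assoc[symmetric])
  moreover have "(\<lambda>j. cadj F ** (cadj (M j) ** M j) ** F) sums (cadj F ** G ** F)"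
    by (rule bounded_linear.sums[OF bounded_linear_matrix_mult_left
          bounded_linear.sums[OF bounded_linear_matrix_mult_right G_sums]])
  ultimately have "(\<lambda>j. cadj (M j ** F) ** (M j ** F)) sums 0"
    by (simp add: cadj_mult matrix_mul_assoc)
  then have "M i ** F = 0" by (rule sums_cadj_mult_self_eq_0)
  then show ?thesis by (simp add: F_def matrix_mult_diff_left)
qed

lemma gram_square: "G ** G = H ** cadj H"
proof -
  have cadj_H_sums: "(\<lambda>j. cadj (N j) ** M j) sums cadj H"
    using bounded_linear.sums[OF bounded_linear_cadj H_sums] by (simp add: cadj_mult)
  have MG: "M l ** G = N l ** cadj H" for l
  proof -
    have "(\<lambda>j. M l ** (cadj (M j) ** M j)) sums (M l ** G)"
      by (rule bounded_linear.sums[OF bounded_linear_matrix_mult_right G_sums])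
    moreover have "(\<lambda>j. N l ** (cadj (N j) ** M j)) sums (N l ** cadj H)"
      by (rule bounded_linear.sums[OF bounded_linear_matrix_mult_right cadj_H_sums])
    ultimately show ?thesis
      using outer_eq by (simp add: sums_iff matrix_mul_assoc)
  qed
  have "(\<lambda>l. cadj (M l) ** (M l ** G)) sums (G ** G)"
    using bounded_linear.sums[OF bounded_linear_matrix_mult_left G_sums]
    by (simp add: matrix_mul_assoc)
  moreover have "(\<lambda>l. cadj (M l) ** N l ** cadj H) sums (H ** cadj H)"
    by (rule bounded_linear.sums[OF bounded_linear_matrix_mult_left H_sums])
  ultimately show ?thesis using MG by (simp add: sums_iff matrix_mul_assoc)
qed

lemma H_mult_cadj_N: "H ** cadj (N j) = G ** cadj (M j)"
proof -
  have "(\<lambda>l. cadj (M l) ** N l ** cadj (N j)) sums (H ** cadj (N j))"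
    by (rule bounded_linear.sums[OF bounded_linear_matrix_mult_left H_sums])
  moreover have "(\<lambda>l. cadj (M l) ** M l ** cadj (M j)) sums (G ** cadj (M j))"
    by (rule bounded_linear.sums[OF bounded_linear_matrix_mult_left G_sums])
  moreover have "cadj (M l) ** N l ** cadj (N j) = cadj (M l) ** M l ** cadj (M j)" for l
    using outer_eq[of l j] by (simp add: matrix_mul_assoc[symmetric])
  ultimately show ?thesis by (simp add: sums_iff)
qed

lemma partial_isometry_mp_inverse_gram_factor:
  "partial_isometry (mp_inverse G ** H) \<and> (\<forall>i. M i ** (mp_inverse G ** H) = N i)"
proof -
  define Gp where "Gp = mp_inverse G"
  define U where "U = Gp ** H"
  define P where "P = Gp ** G"
  have penrose: "G ** Gp ** G = G" "Gp ** G ** Gp = Gp"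
    using penrose_hermitian_mp_inverse[OF gram_hermitian] by (auto simp: penrose_def Gp_def)
  have Gp_hermitian: "cadj Gp = Gp"
    unfolding Gp_def by (rule cadj_mp_inverse_hermitian[OF gram_hermitian])
  have GGp: "G ** Gp = P"
    unfolding P_def Gp_def by (rule mp_inverse_hermitian_commute[OF gram_hermitian])
  have MP: "M i ** P = M i" for i
    unfolding P_def Gp_def by (rule M_mult_gram_projection)
  have UU: "U ** cadj U = P"
  proof -
    have "U ** cadj U = Gp ** (H ** cadj H) ** Gp"
      by (simp add: U_def cadj_mult Gp_hermitian matrix_mul_assoc)
    also have "\<dots> = (Gp ** G) ** (G ** Gp)"
      using gram_square[symmetric] by (simp add: matrix_mul_assoc)
    also have "\<dots> = P" using penrose(2) GGp by (simp add: P_def matrix_mul_assoc)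
    finally show ?thesis .
  qed
  have PU: "P ** U = U"
    using penrose(2) by (simp add: P_def U_def matrix_mul_assoc)
  have MUN: "M i ** U ** cadj (N j) = M i ** cadj (M j)" for i j
  proof -
    have "M i ** U ** cadj (N j) = M i ** Gp ** (G ** cadj (M j))"
      using H_mult_cadj_N[of j] by (simp add: U_def matrix_mul_assoc[symmetric])
    also have "\<dots> = (M i ** P) ** cadj (M j)" by (simp add: P_def matrix_mul_assoc)
    also have "\<dots> = M i ** cadj (M j)" using MP by simp
    finally show ?thesis .
  qed
  have MU: "M i ** U = N i" for i
  proof -
    define E where "E = N i - M i ** U"
    have "E ** cadj E = N i ** cadj (N i) - cadj (M i ** U ** cadj (N i)) - M i ** U ** cadj (N i)
                          + M i ** (U ** cadj U) ** cadj (M i)"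
      by (simp add: E_def cadj_diff cadj_mult matrix_mult_diff_left matrix_mult_diff_right
          matrix_mul_assoc algebra_simps)
    also have "\<dots> = 0" using MUN[of i i] outer_eq[of i i] UU MP by (simp add: cadj_mult)
    finally have "E = 0" by (rule mult_cadj_self_eq_0)
    then show ?thesis by (simp add: E_def)
  qed
  have "partial_isometry U"
    using UU PU by (intro partial_isometryI) (simp add: matrix_mul_assoc)
  then show ?thesis using MU by (simp add: U_def Gp_def)
qed

end

theorem lemma4p2:
  fixes A :: "complex^'n^'n" and C :: "complex^'n^'m"
    and BM :: "complex^'k^'n" and BN :: "complex^'l^'n"
    and DM :: "complex^'k^'m" and DN :: "complex^'l^'m"
  assumes "stable A"
    and "\<forall>z\<in>ball 0 1. \<forall>w\<in>ball 0 1.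
           transfer DM C A BM w ** cadj (transfer DM C A BM z)
         = transfer DN C A BN w ** cadj (transfer DN C A BN z)"
  shows "partial_isometry
           (mp_inverse (cadj DM ** DM + cadj BM ** obs_gramian C A ** BM)
              ** (cadj DM ** DN + cadj BM ** obs_gramian C A ** BN))
     \<and> (\<forall>z\<in>ball 0 1. transfer DM C A BM z **
           (mp_inverse (cadj DM ** DM + cadj BM ** obs_gramian C A ** BM)
              ** (cadj DM ** DN + cadj BM ** obs_gramian C A ** BN))
         = transfer DN C A BN z)"
proof -
  let ?U = "mp_inverse (cadj DM ** DM + cadj BM ** obs_gramian C A ** BM)
              ** (cadj DM ** DN + cadj BM ** obs_gramian C A ** BN)"
  have PI: "partial_isometry ?U" and MU: "\<And>i. markov DM C A BM i ** ?U = markov DN C A BN i"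
    using partial_isometry_mp_inverse_gram_factor[OF markov_gram_sums[OF assms(1)]
        markov_gram_sums[OF assms(1)] markov_outer_eq[OF assms]] by auto
  have "transfer DM C A BM z ** ?U = transfer DN C A BN z" if "z \<in> ball 0 1" for z
  proof -
    have z: "cmod z < 1" using that by simp
    have "(\<lambda>j. mscale (z^j) (markov DM C A BM j) ** ?U) sums (transfer DM C A BM z ** ?U)"
      by (rule bounded_linear.sums[OF bounded_linear_matrix_mult_left transfer_sums_markov[OF assms(1) z]])
    then have "(\<lambda>j. mscale (z^j) (markov DN C A BN j)) sums (transfer DM C A BM z ** ?U)"
      by (simp add: mscale_mult_left MU)
    then show ?thesis using transfer_sums_markov[OF assms(1) z] sums_unique2 by blast
  qed
  then show ?thesis using PI by blast
qed

end
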